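(* For any positive integers $k$ and $q$ with $q\ge2$, no two distinct points of $D_{q,k}$ are scalar multiples of each other.
   Context: For positive integers $q,k$ with $k\ge2$, let $X_{q,k}=\prod_{j=1}^{k-1}(q^{k+j}+q^{k-j}+1)$ and let $D_{q,k}\subseteq\mathbb{Z}^2$ consist of the points $\frac{X_{q,k}}{q^{k+j}+q^{k-j}+1}\left(q^{k+j}-q^{k-j},\,-q^j-2q^k\right)$ for $j=1,\ldots,k-1$. *)

theory Defs
  imports Complex_Main
begin

definition Xqk :: "int \<Rightarrow> nat \<Rightarrow> int" where
  "Xqk q k = (\<Prod>j=1..k-1. q^(k+j) + q^(k-j) + 1)"

definition Dpt :: "int \<Rightarrow> nat \<Rightarrow> nat \<Rightarrow> int \<times> int" where
  "Dpt q k j = (let c = Xqk q k div (q^(k+j) + q^(k-j) + 1)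
                in (c * (q^(k+j) - q^(k-j)), c * (- (q^j) - 2 * q^k)))"

definition Dqk :: "int \<Rightarrow> nat \<Rightarrow> (int \<times> int) set" where
  "Dqk q k = Dpt q k ` {1..k-1}"

end

theory Submission
  imports Defs
begin

text \<open>Write \<open>K = q^k\<close> and \<open>s = q^j\<close>. The \<open>j\<close>-th point is a positive multiple of
  \<open>(K s - K/s, -(s + 2K))\<close>, and the slope \<open>(K s - K/s) / (s + 2K)\<close> of this direction is
  strictly increasing in \<open>s > 0\<close>. Since \<open>q^j\<close> is strictly increasing in \<open>j\<close>, points with
  distinct indices have distinct slopes, so neither is a multiple of the other.\<close>

(* \<open>A\<close> and \<open>B\<close> stand for \<open>K/s\<close> and \<open>K/t\<close>, which keeps the statement inside an ordered ring. *)
lemma cross_product_strict_mono: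
  fixes K s t A B :: "'a::linordered_idom"
  assumes "0 < K" "0 < s" "s < t" "A * s = K" "B * t = K"
  shows "(K * s - A) * (t + 2 * K) < (K * t - B) * (s + 2 * K)"
proof -
  have "s * (K * s - A) = K * s * s - K" "t * (K * t - B) = K * t * t - K"
    using assms(4,5) by (simp_all add: algebra_simps)
  moreover have "s * t * ((K * t - B) * (s + 2 * K)) - s * t * ((K * s - A) * (t + 2 * K))
      = s * (t * (K * t - B)) * (s + 2 * K) - t * (s * (K * s - A)) * (t + 2 * K)"
    by (simp add: algebra_simps)
  ultimately have "s * t * ((K * t - B) * (s + 2 * K)) - s * t * ((K * s - A) * (t + 2 * K))
      = K * (2 * K * s * t * (t - s) + (t * t - s * s) + 2 * K * (t - s))"
    by (simp only:) (simp add: algebra_simps)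
  also have "\<dots> > 0"
    using assms(1-3) by (intro mult_pos_pos add_pos_pos) (auto intro: mult_strict_mono)
  finally show ?thesis
    using assms(2,3) by (simp add: mult_less_cancel_left_pos)
qed

lemma Dpt_direction_cross_strict_mono:
  fixes q :: int
  assumes "1 < q" "j < j'" "j' \<le> k"
  shows "(q^(k+j) - q^(k-j)) * (q^j' + 2 * q^k) < (q^(k+j') - q^(k-j')) * (q^j + 2 * q^k)"
proof -
  have "q^(k-j) * q^j = q^k" "q^(k-j') * q^j' = q^k"
    using assms(2,3) by (simp_all flip: power_add)
  moreover have "0 < q^k" "0 < q^j" "q^j < q^j'"
    using assms(1,2) by (simp_all add: power_strict_increasing)
  ultimately show ?thesis
    using cross_product_strict_mono[of "q^k" "q^j" "q^j'" "q^(k-j)" "q^(k-j')"]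
    by (simp add: power_add mult.commute)
qed

lemma Dpt_scale_pos:
  fixes q :: int
  assumes "0 \<le> q" "j \<in> {1..k-1}"
  shows "0 < Xqk q k div (q^(k+j) + q^(k-j) + 1)"
proof -
  have factor_pos: "\<And>i. 0 < q^(k+i) + q^(k-i) + 1"
    using assms(1) by (simp add: add_nonneg_pos)
  have "0 < Xqk q k"
    unfolding Xqk_def using factor_pos by (intro prod_pos) auto
  moreover have "(q^(k+j) + q^(k-j) + 1) dvd Xqk q k"
    unfolding Xqk_def using assms(2) by (intro dvd_prodI) auto
  ultimately show ?thesis
    using factor_pos[of j] by (auto elim!: dvdE simp: zero_less_mult_iff)
qed

lemma Dpt_cross_eq_imp_eq:
  fixes q :: int
  assumes "1 < q" "j \<in> {1..k-1}" "j' \<in> {1..k-1}"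
    and "fst (Dpt q k j) * snd (Dpt q k j') = fst (Dpt q k j') * snd (Dpt q k j)"
  shows "j = j'"
proof -
  define c where "c i = Xqk q k div (q^(k+i) + q^(k-i) + 1)" for i
  have "0 < c j * c j'"
    unfolding c_def using assms(1-3) by (simp add: Dpt_scale_pos)
  moreover have "c j * c j' * ((q^(k+j) - q^(k-j)) * (q^j' + 2 * q^k))
      = c j * c j' * ((q^(k+j') - q^(k-j')) * (q^j + 2 * q^k))"
    using assms(4) unfolding Dpt_def Let_def c_def[symmetric] by (simp add: algebra_simps)
  ultimately have "(q^(k+j) - q^(k-j)) * (q^j' + 2 * q^k)
      = (q^(k+j') - q^(k-j')) * (q^j + 2 * q^k)"
    by auto
  moreover have "j \<le> k" "j' \<le> k"
    using assms(2,3) by auto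
  ultimately show ?thesis
    using assms(1) Dpt_direction_cross_strict_mono[of q j j' k]
      Dpt_direction_cross_strict_mono[of q j' j k]
    by (cases j j' rule: linorder_cases) auto
qed

lemma real_proportional_imp_cross_eq:
  fixes u v :: "int \<times> int"
  assumes "real_of_int (fst u) = c * real_of_int (fst v)"
    and "real_of_int (snd u) = c * real_of_int (snd v)"
  shows "fst u * snd v = fst v * snd u"
proof -
  have "real_of_int (fst u * snd v) = real_of_int (fst v * snd u)"
    using assms by simp
  then show ?thesis
    by (simp only: of_int_eq_iff)
qed

theorem lemma5:
  fixes q :: int and k :: nat
  assumes "k \<ge> 1" and "q \<ge> 2"
  shows "\<forall>u\<in>Dqk q k. \<forall>v\<in>Dqk q k. u \<noteq> v \<longrightarrow>
           \<not> (\<exists>c::real. real_of_int (fst u) = c * real_of_int (fst v) \<and>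
                        real_of_int (snd u) = c * real_of_int (snd v))"
proof (intro ballI impI notI)
  fix u v
  assume "u \<in> Dqk q k" "v \<in> Dqk q k" "u \<noteq> v"
  then obtain j j' where "j \<in> {1..k-1}" "j' \<in> {1..k-1}" "j \<noteq> j'"
    and "u = Dpt q k j" "v = Dpt q k j'"
    unfolding Dqk_def by blast
  moreover assume "\<exists>c::real. real_of_int (fst u) = c * real_of_int (fst v) \<and>
                              real_of_int (snd u) = c * real_of_int (snd v)"
  then have "fst u * snd v = fst v * snd u"
    using real_proportional_imp_cross_eq by blast
  ultimately show False
    using Dpt_cross_eq_imp_eq[of q j k j'] assms(2) by auto
qed

end
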